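(* Let $0<p<1$ and let $\{a_n\}_{n\geq 0}$ be a sequence of non-negative real numbers such that $\left\{\frac{1}{n+1}a^x_n(p)\right\}_{n\geq 0}$ converges to a finite limit $a\in\mathbb{R}$, where $$a^x_n(p)=\sum_{i=0}^{\lfloor pn-\epsilon(n)\rfloor}w_n^i(p)\, a_i.$$ Then $\{a^*_n\}_{n\geq 0}$ converges to $a$.
   Context: $a^*_n=\frac{1}{n+1}\sum_{i=0}^n a_i$. For $0<p<1$, $n\in\mathbb{N}$ and $0\le i\le n$, $w_n^i(p)=\sum_{j=i}^n\binom{j}{i}p^i(1-p)^{j-i}$. $\epsilon(n)=\sqrt{n}\log n$ for $n\geq2$ and $\epsilon(n)=1$ otherwise; a sum whose upper index is negative is $0$. *)

theory Defs
  imports "HOL-Analysis.Analysis"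
begin

definition cesaro :: "(nat \<Rightarrow> real) \<Rightarrow> nat \<Rightarrow> real" where
  "cesaro a n = (\<Sum>i=0..n. a i) / real (n + 1)"

definition wgt :: "real \<Rightarrow> nat \<Rightarrow> nat \<Rightarrow> real" where
  "wgt p n i = (\<Sum>j=i..n. real (j choose i) * p ^ i * (1 - p) ^ (j - i))"

definition eps :: "nat \<Rightarrow> real" where
  "eps n = (if n \<ge> 2 then sqrt (real n) * ln (real n) else 1)"

definition ax :: "(nat \<Rightarrow> real) \<Rightarrow> real \<Rightarrow> nat \<Rightarrow> real" where
  "ax a p n = (\<Sum>i\<in>{i. int i \<le> \<lfloor>p * real n - eps n\<rfloor>}. wgt p n i * a i)"

end

theory Submission
  imports Defs "HOL-Probability.Hoeffding" "HOL-Real_Asymp.Real_Asymp"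
begin

text \<open>
  The weights are binomial tail probabilities: \<open>p w\<^sub>n\<^sup>i(p) = P(B > i)\<close> for \<open>B ~ Bin(n+1, p)\<close>.
  With \<open>k\<^sub>n = \<lfloor>pn - \<epsilon>(n)\<rfloor>\<close>, Hoeffding's inequality gives \<open>P(B \<le> k\<^sub>n) \<le> exp(-2\<epsilon>(n)\<^sup>2/(n+1)) \<rightarrow> 0\<close>,
  so all weights in \<open>p a\<^sup>x\<^sub>n(p)\<close> are \<open>1 - o(1)\<close> and \<open>p a\<^sup>x\<^sub>n(p) = (1 - o(1)) (a\<^sub>0 + \<dots> + a\<^sub>k\<^sub>n)\<close>.
  Since \<open>k\<^sub>n/(n+1) \<rightarrow> p\<close>, the Cesaro means converge to \<open>L\<close> along the indices \<open>k\<^sub>n\<close>; as \<open>k\<^sub>n\<close>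
  tends to infinity with increments at most one, every large index is some \<open>k\<^sub>n\<close>.
\<close>

definition binomial_term :: "real \<Rightarrow> nat \<Rightarrow> nat \<Rightarrow> real" where
  "binomial_term p N k = real (N choose k) * p ^ k * (1 - p) ^ (N - k)"

definition binomial_cdf :: "real \<Rightarrow> nat \<Rightarrow> nat \<Rightarrow> real" where
  "binomial_cdf p N i = (\<Sum>k\<le>i. binomial_term p N k)"

definition ax_index :: "real \<Rightarrow> nat \<Rightarrow> nat" where
  "ax_index p n = nat \<lfloor>p * real n - eps n\<rfloor>"

lemma binomial_term_nonneg: "0 \<le> p \<Longrightarrow> p \<le> 1 \<Longrightarrow> 0 \<le> binomial_term p N k"
  by (simp add: binomial_term_def)

lemma binomial_term_Suc_Suc:
  "binomial_term p (Suc N) (Suc i) = p * binomial_term p N i + (1 - p) * binomial_term p N (Suc i)"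
proof (cases "i < N")
  case True
  then have "N - i = Suc (N - Suc i)" by simp
  then show ?thesis unfolding binomial_term_def by (simp add: algebra_simps)
next
  case False
  then show ?thesis unfolding binomial_term_def by (simp add: algebra_simps)
qed

lemma binomial_cdf_Suc: "binomial_cdf p (Suc N) i = binomial_cdf p N i - p * binomial_term p N i"
  unfolding binomial_cdf_def
proof (induction i)
  case 0
  then show ?case by (simp add: binomial_term_def algebra_simps)
next
  case (Suc i)
  then show ?case using binomial_term_Suc_Suc[of p N i] by (simp add: algebra_simps)
qed

lemma binomial_cdf_eq_1: assumes "N \<le> i" shows "binomial_cdf p N i = 1"
proof -
  have "binomial_cdf p N i = (\<Sum>k\<le>N. binomial_term p N k)"
    unfolding binomial_cdf_def using assms
    by (intro sum.mono_neutral_right) (auto simp: binomial_term_def)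
  also have "\<dots> = (p + (1 - p)) ^ N" unfolding binomial_term_def binomial_ring by simp
  finally show ?thesis by simp
qed

lemma binomial_cdf_nonneg: "0 \<le> p \<Longrightarrow> p \<le> 1 \<Longrightarrow> 0 \<le> binomial_cdf p N i"
  unfolding binomial_cdf_def by (intro sum_nonneg binomial_term_nonneg)

lemma binomial_cdf_mono: "0 \<le> p \<Longrightarrow> p \<le> 1 \<Longrightarrow> i \<le> j \<Longrightarrow> binomial_cdf p N i \<le> binomial_cdf p N j"
  unfolding binomial_cdf_def by (intro sum_mono2) (auto intro: binomial_term_nonneg)

lemma mult_wgt_eq_binomial_tail: "p * wgt p n i = 1 - binomial_cdf p (Suc n) i"
proof (induction n)
  case 0
  then show ?case
    using binomial_cdf_eq_1[of 1 i p]
    by (cases i) (simp_all add: wgt_def binomial_cdf_def binomial_term_def)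
next
  case (Suc n)
  have "p * wgt p (Suc n) i = p * wgt p n i + p * binomial_term p (Suc n) i"
    unfolding wgt_def binomial_term_def by (simp add: sum.cl_ivl_Suc algebra_simps)
  then show ?case using Suc binomial_cdf_Suc[of p "Suc n" i] by simp
qed

lemma binomial_cdf_le_exp:
  assumes "0 \<le> p" "p \<le> 1" "0 < N" "0 \<le> t" "real i \<le> real N * p - t"
  shows "binomial_cdf p N i \<le> exp (-2 * t\<^sup>2 / N)"
proof -
  interpret binomial_distribution N p using assms by unfold_locales auto
  have "binomial_cdf p N i = measure_pmf.prob (binomial_pmf N p) {..i}"
    using assms by (simp add: measure_measure_pmf_finite binomial_cdf_def binomial_term_def)
  also have "\<dots> \<le> measure_pmf.prob (binomial_pmf N p) {x. real x \<le> real N * p - t}"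
    using assms(5) by (intro measure_pmf.finite_measure_mono) auto
  also have "\<dots> \<le> exp (-2 * t\<^sup>2 / N)" by (rule prob_le[OF assms(3,4)])
  finally show ?thesis .
qed

lemma weighted_sum_le_sum:
  assumes "0 \<le> p" "p \<le> 1" "\<And>i. 0 \<le> a i"
  shows "p * (\<Sum>i\<le>k. wgt p n i * a i) \<le> (\<Sum>i\<le>k. a i)"
  unfolding sum_distrib_left mult.assoc[symmetric] mult_wgt_eq_binomial_tail
  using assms by (intro sum_mono) (simp add: algebra_simps binomial_cdf_nonneg)

lemma weighted_sum_ge_sum:
  assumes "0 \<le> p" "p \<le> 1" "\<And>i. 0 \<le> a i"
  shows "(1 - binomial_cdf p (Suc n) k) * (\<Sum>i\<le>k. a i) \<le> p * (\<Sum>i\<le>k. wgt p n i * a i)"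
  unfolding sum_distrib_left mult.assoc[symmetric] mult_wgt_eq_binomial_tail
  using assms by (intro sum_mono mult_right_mono) (auto intro: binomial_cdf_mono)

lemma LIMSEQ_of_relative_error:
  fixes s x \<delta> :: "nat \<Rightarrow> real"
  assumes "x \<longlonglongrightarrow> l" "\<delta> \<longlonglongrightarrow> 0"
    and "eventually (\<lambda>n. 0 \<le> \<delta> n \<and> (1 - \<delta> n) * s n \<le> x n \<and> x n \<le> s n) sequentially"
  shows "s \<longlonglongrightarrow> l"
proof -
  have "eventually (\<lambda>n. \<delta> n < 1) sequentially"
    using assms(2) by (rule order_tendstoD) simp
  with assms(3) have bounds: "eventually (\<lambda>n. 0 \<le> s n - x n \<and> s n - x n \<le> \<delta> n * x n / (1 - \<delta> n)) sequentially"
  proof eventually_elim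
    case (elim n)
    then have "s n \<le> x n / (1 - \<delta> n)" by (simp add: field_simps)
    then have "\<delta> n * s n \<le> \<delta> n * x n / (1 - \<delta> n)"
      using elim by (metis mult_left_mono times_divide_eq_right)
    then show ?case using elim by (simp add: algebra_simps)
  qed
  have "(\<lambda>n. s n - x n) \<longlonglongrightarrow> 0"
  proof (rule tendsto_sandwich[of "\<lambda>_. 0" _ _ "\<lambda>n. \<delta> n * x n / (1 - \<delta> n)"])
    show "eventually (\<lambda>n. 0 \<le> s n - x n) sequentially"
      using bounds by eventually_elim simp
    show "eventually (\<lambda>n. s n - x n \<le> \<delta> n * x n / (1 - \<delta> n)) sequentially"
      using bounds by eventually_elim simp
    have "(\<lambda>n. \<delta> n * x n / (1 - \<delta> n)) \<longlonglongrightarrow> 0 * l / (1 - 0)"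
      by (intro tendsto_intros assms(1,2)) simp
    then show "(\<lambda>n. \<delta> n * x n / (1 - \<delta> n)) \<longlonglongrightarrow> 0" by simp
  qed simp
  from tendsto_add[OF this assms(1)] show ?thesis by simp
qed

lemma exists_eq_of_unit_steps:
  fixes g :: "nat \<Rightarrow> nat"
  assumes "\<And>n. N \<le> n \<Longrightarrow> g (Suc n) \<le> Suc (g n)" "g N \<le> k" "N \<le> n\<^sub>0" "k \<le> g n\<^sub>0"
  shows "\<exists>n\<ge>N. g n = k"
  using assms(3,4)
proof (induction n\<^sub>0 rule: dec_induct)
  case base
  then show ?case using assms(2) by auto
next
  case (step n)
  then show ?case using assms(1)[of n] by (cases "k \<le> g n") (auto intro!: exI[of _ "Suc n"])
qed

lemma LIMSEQ_of_comp_unit_steps: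
  fixes f :: "nat \<Rightarrow> 'a::topological_space" and g :: "nat \<Rightarrow> nat"
  assumes "filterlim g at_top sequentially"
    and "eventually (\<lambda>n. g (Suc n) \<le> Suc (g n)) sequentially"
    and "(\<lambda>n. f (g n)) \<longlonglongrightarrow> l"
  shows "f \<longlonglongrightarrow> l"
proof (rule topological_tendstoI)
  fix U assume "open U" "l \<in> U"
  with assms(3) have "eventually (\<lambda>n. f (g n) \<in> U) sequentially"
    by (rule topological_tendstoD)
  from eventually_conj[OF this assms(2)] obtain N
    where N: "\<And>n. N \<le> n \<Longrightarrow> f (g n) \<in> U \<and> g (Suc n) \<le> Suc (g n)"
    unfolding eventually_sequentially by blast
  have "eventually (\<lambda>k. f k \<in> U) sequentially"
    unfolding eventually_sequentially
  proof (intro exI allI impI)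
    fix k assume "g N \<le> k"
    have "eventually (\<lambda>n. k \<le> g n) sequentially"
      using assms(1) by (simp add: filterlim_at_top)
    from eventually_conj[OF this eventually_ge_at_top[of N]] obtain n\<^sub>0 where "k \<le> g n\<^sub>0" "N \<le> n\<^sub>0"
      unfolding eventually_sequentially by auto
    then obtain n where "N \<le> n" "g n = k"
      using exists_eq_of_unit_steps[of N g k n\<^sub>0] N \<open>g N \<le> k\<close> by blast
    then show "f k \<in> U" using N by blast
  qed
  then show "eventually (\<lambda>k. f k \<in> U) sequentially" .
qed

lemma eps_nonneg: "0 \<le> eps n"
  by (simp add: eps_def)

lemma eps_Suc_ge: "2 \<le> n \<Longrightarrow> eps n \<le> eps (Suc n)"
  unfolding eps_def by (auto intro!: mult_mono)

lemma eventually_eps_eq: "eventually (\<lambda>n. eps n = sqrt (real n) * ln (real n)) sequentially"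
  using eventually_ge_at_top[of "2::nat"] by eventually_elim (simp add: eps_def)

lemma eventually_eps_le: "0 < p \<Longrightarrow> eventually (\<lambda>n. eps n \<le> p * real n) sequentially"
proof -
  assume "0 < p"
  then have "eventually (\<lambda>n::nat. sqrt (real n) * ln (real n) \<le> p * real n) sequentially"
    by real_asymp
  with eventually_eps_eq show ?thesis by eventually_elim simp
qed

lemma eps_over_Suc_tendsto_0: "(\<lambda>n. eps n / real (Suc n)) \<longlonglongrightarrow> 0"
proof -
  have "(\<lambda>n::nat. sqrt (real n) * ln (real n) / real (Suc n)) \<longlonglongrightarrow> 0" by real_asymp
  then show ?thesis
    by (rule Lim_transform_eventually) (use eventually_eps_eq in \<open>auto elim: eventually_mono\<close>)
qed

lemma hoeffding_bound_eps_tendsto_0: "(\<lambda>n. exp (-2 * (eps n)\<^sup>2 / real (Suc n))) \<longlonglongrightarrow> 0"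
proof -
  have "(\<lambda>n::nat. exp (-2 * (sqrt (real n) * ln (real n))\<^sup>2 / real (Suc n))) \<longlonglongrightarrow> 0" by real_asymp
  then show ?thesis
    by (rule Lim_transform_eventually) (use eventually_eps_eq in \<open>auto elim: eventually_mono\<close>)
qed

lemma ax_index_bounds:
  assumes "eps n \<le> p * real n"
  shows "real (ax_index p n) \<le> p * real n - eps n" "p * real n - eps n - 1 < real (ax_index p n)"
  using assms unfolding ax_index_def by linarith+

lemma ax_eq_sum_upto_ax_index:
  assumes "eps n \<le> p * real n"
  shows "ax a p n = (\<Sum>i\<le>ax_index p n. wgt p n i * a i)"
proof -
  have "{i. int i \<le> \<lfloor>p * real n - eps n\<rfloor>} = {..ax_index p n}"
    using assms unfolding ax_index_def by (auto simp: le_nat_iff)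
  then show ?thesis unfolding ax_def by simp
qed

lemma ax_index_Suc_le: "p \<le> 1 \<Longrightarrow> 2 \<le> n \<Longrightarrow> ax_index p (Suc n) \<le> Suc (ax_index p n)"
  using eps_Suc_ge[of n] unfolding ax_index_def by (simp add: algebra_simps) linarith

lemma ax_index_over_Suc_tendsto:
  assumes "0 < p"
  shows "(\<lambda>n. real (ax_index p n) / real (Suc n)) \<longlonglongrightarrow> p"
proof (rule tendsto_sandwich)
  have lim: "(\<lambda>n. p * (real n / real (Suc n)) - eps n / real (Suc n) - c / real (Suc n)) \<longlonglongrightarrow> p * 1 - 0 - 0"
    for c :: real
  proof -
    have "(\<lambda>n::nat. c / real (Suc n)) \<longlonglongrightarrow> 0" by real_asymp
    then show ?thesis by (intro tendsto_intros eps_over_Suc_tendsto_0 LIMSEQ_n_over_Suc_n)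
  qed
  show "(\<lambda>n. (p * real n - eps n - 1) / real (Suc n)) \<longlonglongrightarrow> p"
    using lim[of 1] by (simp add: diff_divide_distrib)
  show "(\<lambda>n. (p * real n - eps n) / real (Suc n)) \<longlonglongrightarrow> p"
    using lim[of 0] by (simp add: diff_divide_distrib)
  show "eventually (\<lambda>n. (p * real n - eps n - 1) / real (Suc n) \<le> real (ax_index p n) / real (Suc n)) sequentially"
    using eventually_eps_le[OF assms] by eventually_elim
      (metis ax_index_bounds(2) divide_right_mono less_imp_le of_nat_0_le_iff)
  show "eventually (\<lambda>n. real (ax_index p n) / real (Suc n) \<le> (p * real n - eps n) / real (Suc n)) sequentially"
    using eventually_eps_le[OF assms] by eventually_elim
      (intro divide_right_mono ax_index_bounds; simp)
qed

lemma ax_index_at_top: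
  assumes "0 < p"
  shows "filterlim (ax_index p) at_top sequentially"
proof -
  have "filterlim (\<lambda>n. real (ax_index p n) / real (Suc n) * real (Suc n)) at_top sequentially"
    by (rule filterlim_tendsto_pos_mult_at_top[OF ax_index_over_Suc_tendsto[OF assms] assms]) real_asymp
  then show ?thesis
    by (simp add: filterlim_real_sequentially filterlim_sequentially_iff_filterlim_real)
qed

lemma binomial_cdf_ax_index_tendsto_0:
  assumes "0 < p" "p \<le> 1"
  shows "(\<lambda>n. binomial_cdf p (Suc n) (ax_index p n)) \<longlonglongrightarrow> 0"
proof (rule tendsto_sandwich[OF _ _ tendsto_const hoeffding_bound_eps_tendsto_0])
  show "eventually (\<lambda>n. 0 \<le> binomial_cdf p (Suc n) (ax_index p n)) sequentially"
    using assms by (simp add: binomial_cdf_nonneg)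
  show "eventually (\<lambda>n. binomial_cdf p (Suc n) (ax_index p n) \<le> exp (-2 * (eps n)\<^sup>2 / real (Suc n))) sequentially"
    using eventually_eps_le[OF assms(1)]
  proof eventually_elim
    case (elim n)
    have "real (ax_index p n) \<le> real (Suc n) * p - eps n"
      using ax_index_bounds(1)[OF elim] assms by (simp add: algebra_simps)
    then show ?case using assms by (intro binomial_cdf_le_exp) (auto simp: eps_nonneg)
  qed
qed

theorem lemma10:
  fixes a :: "nat \<Rightarrow> real" and p L :: real
  assumes "0 < p" "p < 1"
    and "\<And>n. a n \<ge> 0"
    and "(\<lambda>n. ax a p n / real (n + 1)) \<longlonglongrightarrow> L"
  shows "cesaro a \<longlonglongrightarrow> L"
proof -
  define k where "k = ax_index p"
  define s where "s n = (\<Sum>i\<le>k n. a i) / real (Suc n)" for n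
  have "(\<lambda>n. p * ax a p n / real (Suc n)) \<longlonglongrightarrow> p * L"
    using tendsto_mult_left[OF assms(4), of p] by simp
  moreover have "(\<lambda>n. binomial_cdf p (Suc n) (k n)) \<longlonglongrightarrow> 0"
    unfolding k_def using assms by (intro binomial_cdf_ax_index_tendsto_0) auto
  moreover have "eventually (\<lambda>n. 0 \<le> binomial_cdf p (Suc n) (k n)
      \<and> (1 - binomial_cdf p (Suc n) (k n)) * s n \<le> p * ax a p n / real (Suc n)
      \<and> p * ax a p n / real (Suc n) \<le> s n) sequentially"
    using eventually_eps_le[OF assms(1)]
    by eventually_elim (use assms in \<open>auto simp: k_def s_def ax_eq_sum_upto_ax_index binomial_cdf_nonneg
        intro!: divide_right_mono weighted_sum_le_sum weighted_sum_ge_sum[THEN order.trans]\<close>)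
  ultimately have "s \<longlonglongrightarrow> p * L"
    by (rule LIMSEQ_of_relative_error)
  then have "(\<lambda>n. s n / (real (k n) / real (Suc n) + 1 / real (Suc n))) \<longlonglongrightarrow> p * L / (p + 0)"
    using assms(1) unfolding k_def
    by (intro tendsto_intros ax_index_over_Suc_tendsto LIMSEQ_inverse_real_of_nat[unfolded inverse_eq_divide]) auto
  moreover have "s n / (real (k n) / real (Suc n) + 1 / real (Suc n)) = cesaro a (k n)" for n
    by (simp add: s_def cesaro_def atLeast0AtMost add_divide_distrib[symmetric])
  ultimately have cesaro_along_k: "(\<lambda>n. cesaro a (k n)) \<longlonglongrightarrow> L"
    using assms(1) by simp
  have k_steps: "eventually (\<lambda>n. k (Suc n) \<le> Suc (k n)) sequentially"
    using eventually_ge_at_top[of 2] by eventually_elim (use assms in \<open>simp add: k_def ax_index_Suc_le\<close>)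
  show ?thesis
    using ax_index_at_top[OF assms(1)] k_steps cesaro_along_k unfolding k_def
    by (rule LIMSEQ_of_comp_unit_steps)
qed

end
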